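(* Let $n$ be a prime with $n\equiv 1$ or $5\pmod 6$. Then there exists a one-factorization $\mathcal{T}$ of $K_{2n}$ on the vertex set $\{0,1,\dots,2n-1\}$ such that: (1) if $n\equiv 5\pmod 6$, then $\mathcal{T}=\{\mathcal{T}_{i,j}: 1\le i\le \frac{2n-1}{3},\ 1\le j\le 3\}$, where $\mathcal{T}_{i,1}\cup\mathcal{T}_{i,2}\cup\mathcal{T}_{i,3}=\mathcal{A}_i\cup\mathcal{B}_i\cup\mathcal{D}_{i-1}$ for $1\le i\le\frac{n-1}{2}$, and $\mathcal{T}_{i,1}=\mathcal{D}_{3i-n-2}$, $\mathcal{T}_{i,2}=\mathcal{D}_{3i-n-1}$, $\mathcal{T}_{i,3}=\mathcal{D}_{3i-n}$ for $\frac{n+1}{2}\le i\le\frac{2n-1}{3}$; (2) if $n\equiv 1\pmod 6$, then $\mathcal{T}=\{\mathcal{T}_{i,j}: 1\le i\le\frac{n-1}{2},\ 1\le j\le 3\}\cup\{\mathcal{D}_i:\frac{n-1}{2}\le i\le n-1\}$, where $\mathcal{T}_{i,1}\cup\mathcal{T}_{i,2}\cup\mathcal{T}_{i,3}=\mathcal{A}_i\cup\mathcal{B}_i\cup\mathcal{D}_{i-1}$ for $1\le i\le \frac{n-1}{2}$.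
   Context: For $1\le i\le \frac{n-1}{2}$: $\mathcal{A}_i=\{\{x,y\}: x,y\in\{0,\dots,n-1\},\ y-x\equiv i \pmod n\}$ and $\mathcal{B}_i=\{\{x,y\}: x,y\in\{n,\dots,2n-1\},\ y-x\equiv i\pmod n\}$. For $0\le i\le n-1$: $\mathcal{D}_i=\{\{x,y\}: 0\le x\le n-1,\ n\le y\le 2n-1,\ y-x\equiv i\pmod n\}$. A one-factor of $K_{2n}$ is a perfect matching; a one-factorization is a partition of the edge set of $K_{2n}$ into $2n-1$ one-factors. *)

theory Defs
  imports "HOL-Computational_Algebra.Primes"
begin

definition Kedges :: "nat \<Rightarrow> nat set set" where
  "Kedges n = {{x, y} | x y. x < 2*n \<and> y < 2*n \<and> x \<noteq> y}"

definition one_factor :: "nat \<Rightarrow> nat set set \<Rightarrow> bool" where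
  "one_factor n M \<longleftrightarrow> M \<subseteq> Kedges n \<and> (\<forall>v < 2*n. \<exists>!e. e \<in> M \<and> v \<in> e)"

definition one_factorization :: "nat \<Rightarrow> nat set set set \<Rightarrow> bool" where
  "one_factorization n F \<longleftrightarrow>
     (\<forall>M \<in> F. one_factor n M) \<and> pairwise disjnt F \<and> \<Union>F = Kedges n \<and> card F = 2*n - 1"

definition A_cls :: "nat \<Rightarrow> nat \<Rightarrow> nat set set" where
  "A_cls n i = {{x, y} | x y. x < n \<and> y < n \<and> (int y - int x) mod int n = int i mod int n}"

definition B_cls :: "nat \<Rightarrow> nat \<Rightarrow> nat set set" where
  "B_cls n i = {{x, y} | x y. n \<le> x \<and> x < 2*n \<and> n \<le> y \<and> y < 2*n \<and>
                            (int y - int x) mod int n = int i mod int n}"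

definition D_cls :: "nat \<Rightarrow> nat \<Rightarrow> nat set set" where
  "D_cls n i = {{x, y} | x y. x < n \<and> n \<le> y \<and> y < 2*n \<and>
                            (int y - int x) mod int n = int i mod int n}"

end

theory Submission
  imports Defs
begin

text \<open>
  For \<open>1 \<le> i \<le> (n-1)/2\<close> the graph \<open>A\<^sub>i \<union> B\<^sub>i \<union> D\<^sub>i\<^sub>-\<^sub>1\<close> is a prism: since \<open>n\<close> is prime, the
  step \<open>i\<close> generates \<open>\<int>/n\<close>, so \<open>A\<^sub>i\<close> and \<open>B\<^sub>i\<close> are Hamiltonian cycles \<open>x\<^sub>k = k i\<close> and
  \<open>n + x\<^sub>k + i - 1\<close> on the two halves, and \<open>D\<^sub>i\<^sub>-\<^sub>1\<close> joins them rung by rung.  A prism over an odd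
  cycle is 3-edge-colourable: colour the cycle edges \<open>{k, k+1}\<close> alternately 1, 2 and the closing
  edge \<open>{n-1, 0}\<close> with 3, and give the rungs the colour missing at their ends.  The three colour
  classes together with the matchings \<open>D\<^sub>k\<close>, \<open>(n-1)/2 \<le> k \<le> n-1\<close>, are \<open>2n - 1\<close> pairwise
  disjoint perfect matchings covering every edge of \<open>K\<^sub>2\<^sub>n\<close>.  The residue of \<open>n\<close> modulo 6 only
  matters for relabelling the \<open>D\<^sub>k\<close> as \<open>T\<^sub>i\<^sub>,\<^sub>j\<close>.
\<close>

section \<open>One-factorizations from edge colourings\<close>

lemma doubleton_in_doubletons_iff:
  "{x, y} \<in> {{a, b} | a b. Q a b} \<longleftrightarrow> Q x y \<or> Q y x"
  by (auto simp: doubleton_eq_iff insert_commute)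

lemma D_cls_subset_Kedges: "D_cls n k \<subseteq> Kedges n"
  unfolding D_cls_def Kedges_def by force

lemma A_cls_B_cls_subset_Kedges:
  assumes "0 < i" "i < n"
  shows "A_cls n i \<union> B_cls n i \<subseteq> Kedges n"
proof -
  have "int i mod int n \<noteq> 0" using assms by simp
  then show ?thesis unfolding A_cls_def B_cls_def Kedges_def by force
qed

definition partner_matching :: "('c \<Rightarrow> nat \<Rightarrow> nat) \<Rightarrow> nat \<Rightarrow> 'c \<Rightarrow> nat set set" where
  "partner_matching partner n c = {{v, partner c v} | v. v < 2*n}"

locale edge_colouring =
  fixes n :: nat and C :: "'c set"
    and colour :: "nat \<Rightarrow> nat \<Rightarrow> 'c" and partner :: "'c \<Rightarrow> nat \<Rightarrow> nat"
  assumes card_colours: "card C = 2*n - 1"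
    and n_pos: "1 \<le> n"
    and colour_commute: "\<And>x y. x < 2*n \<Longrightarrow> y < 2*n \<Longrightarrow> colour x y = colour y x"
    and partner: "\<And>c v. c \<in> C \<Longrightarrow> v < 2*n \<Longrightarrow>
      partner c v < 2*n \<and> partner c v \<noteq> v \<and> colour v (partner c v) = c"
    and colour_partner: "\<And>x y. x < 2*n \<Longrightarrow> y < 2*n \<Longrightarrow> x \<noteq> y \<Longrightarrow>
      colour x y \<in> C \<and> partner (colour x y) x = y"
begin

abbreviation M :: "'c \<Rightarrow> nat set set" where "M \<equiv> partner_matching partner n"

lemma partner_partner:
  "c \<in> C \<Longrightarrow> v < 2*n \<Longrightarrow> partner c (partner c v) = v"
  using partner[of c v] colour_partner[of "partner c v" v] colour_commute[of v "partner c v"]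
  by metis

lemma colour_unique:
  assumes "c \<in> C" "d \<in> C" "u < 2*n" "v < 2*n" "{u, partner c u} = {v, partner d v}"
  shows "c = d"
proof -
  have cu: "colour u (partner c u) = c" and dv: "colour v (partner d v) = d"
    using partner assms by auto
  from assms(5) consider "u = v" "partner c u = partner d v" | "u = partner d v" "partner c u = v"
    by (auto simp: doubleton_eq_iff)
  then show ?thesis
    by cases (use cu dv colour_commute[of u v] assms(3,4) in metis)+
qed

lemma one_factor_matching:
  assumes c: "c \<in> C"
  shows "one_factor n (M c)"
  unfolding one_factor_def
proof
  show "M c \<subseteq> Kedges n"
    using partner[OF c] unfolding partner_matching_def Kedges_def by fastforce
  show "\<forall>v<2*n. \<exists>!e. e \<in> M c \<and> v \<in> e"
  proof (intro allI impI ex1I)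
    fix v assume v: "v < 2*n"
    show "{v, partner c v} \<in> M c \<and> v \<in> {v, partner c v}"
      unfolding partner_matching_def using v by blast
    fix e assume "e \<in> M c \<and> v \<in> e"
    then obtain u where "u < 2*n" "e = {u, partner c u}" "v = u \<or> v = partner c u"
      unfolding partner_matching_def by blast
    then show "e = {v, partner c v}"
      using partner_partner[OF c] by auto
  qed
qed

lemma inj_on_matching: "inj_on M C"
proof (rule inj_onI)
  fix c d assume cd: "c \<in> C" "d \<in> C" "M c = M d"
  have "{0, partner c 0} \<in> M c"
    using n_pos unfolding partner_matching_def by auto
  then obtain v where "v < 2*n" "{0, partner c 0} = {v, partner d v}"
    using cd(3) unfolding partner_matching_def by auto
  then show "c = d" using colour_unique[of c d 0 v] cd n_pos by simp
qed

lemma disjoint_matchings: "pairwise disjnt (M ` C)"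
proof (rule pairwiseI)
  fix X Y assume "X \<in> M ` C" "Y \<in> M ` C" "X \<noteq> Y"
  then obtain c d where cd: "c \<in> C" "d \<in> C" "X = M c" "Y = M d" "c \<noteq> d" by blast
  show "disjnt X Y"
    unfolding disjnt_iff
  proof (intro allI notI)
    fix e assume "e \<in> X \<and> e \<in> Y"
    then obtain u v where "u < 2*n" "v < 2*n" "e = {u, partner c u}" "e = {v, partner d v}"
      using cd unfolding partner_matching_def by blast
    then show False using colour_unique[OF cd(1,2)] cd(5) by metis
  qed
qed

lemma Union_matchings: "\<Union> (M ` C) = Kedges n"
proof
  show "\<Union> (M ` C) \<subseteq> Kedges n"
    using one_factor_matching unfolding one_factor_def by blast
  show "Kedges n \<subseteq> \<Union> (M ` C)"
  proof
    fix e assume "e \<in> Kedges n"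
    then obtain x y where xy: "e = {x, y}" "x < 2*n" "y < 2*n" "x \<noteq> y"
      unfolding Kedges_def by blast
    then have "e \<in> M (colour x y)"
      using colour_partner[of x y] unfolding partner_matching_def by force
    then show "e \<in> \<Union> (M ` C)" using colour_partner xy by blast
  qed
qed

lemma Union_matchings_eq:
  assumes "S \<subseteq> C" and "E \<subseteq> Kedges n"
    and "\<And>x y. x < 2*n \<Longrightarrow> y < 2*n \<Longrightarrow> x \<noteq> y \<Longrightarrow> {x, y} \<in> E \<longleftrightarrow> colour x y \<in> S"
  shows "\<Union> (M ` S) = E"
proof
  show "\<Union> (M ` S) \<subseteq> E"
    using assms(1,3) partner unfolding partner_matching_def by force
  show "E \<subseteq> \<Union> (M ` S)"
  proof
    fix e assume "e \<in> E"
    then obtain x y where xy: "e = {x, y}" "x < 2*n" "y < 2*n" "x \<noteq> y"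
      using assms(2) unfolding Kedges_def by blast
    then have "e \<in> M (colour x y)" and "colour x y \<in> S"
      using colour_partner[of x y] assms(3) \<open>e \<in> E\<close> unfolding partner_matching_def by force+
    then show "e \<in> \<Union> (M ` S)" by blast
  qed
qed

theorem one_factorization_matchings: "one_factorization n (M ` C)"
  unfolding one_factorization_def
  using one_factor_matching disjoint_matchings Union_matchings
    card_image[OF inj_on_matching] card_colours
  by auto

end

section \<open>Arithmetic on the cycle \<open>\<int>/n\<close>\<close>

locale odd_prime =
  fixes n :: nat
  assumes prime_n: "prime n" and odd_n: "odd n"
begin

lemma n_ge3: "n \<ge> 3"
proof -
  have "n \<ge> 2" using prime_n prime_ge_2_nat by blast
  moreover have "n \<noteq> 2" using odd_n by auto
  ultimately show ?thesis by linarith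
qed

definition h :: nat where "h = (n - 1) div 2"
lemma n_eq: "n = 2*h+1" using odd_n n_ge3 unfolding h_def by presburger

definition shift :: "nat \<Rightarrow> int \<Rightarrow> nat" where "shift x a = nat ((int x + a) mod int n)"

lemma int_n_pos: "int n > 0" using n_ge3 by simp

lemma int_shift: "int (shift x a) = (int x + a) mod int n"
  unfolding shift_def using int_n_pos by simp

lemma shift_lt: "shift x a < n"
  using int_shift[of x a] int_n_pos by (metis of_nat_less_iff pos_mod_bound)

lemma shift_shift: "shift (shift x a) b = shift x (a + b)"
proof -
  have "int (shift (shift x a) b) = int (shift x (a+b))"
    unfolding int_shift by (simp add: mod_add_left_eq add.assoc)
  thus ?thesis by simp
qed

lemma shift_eq_iff:
  "y < n \<Longrightarrow> (shift x a = y) \<longleftrightarrow> (int y - int x) mod int n = a mod int n"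
proof -
  assume y: "y < n"
  have "(shift x a = y) \<longleftrightarrow> (int x + a) mod int n = int y mod int n"
    using y by (metis int_shift of_nat_eq_iff of_nat_less_iff zmod_int mod_less)
  also have "\<dots> \<longleftrightarrow> int n dvd (int x + a) - int y" by (rule mod_eq_dvd_iff)
  also have "\<dots> \<longleftrightarrow> int n dvd (int y - int x) - a"
    by (metis dvd_minus_iff minus_diff_eq diff_diff_eq2 add.commute diff_diff_eq)
  also have "\<dots> \<longleftrightarrow> (int y - int x) mod int n = a mod int n" by (rule mod_eq_dvd_iff[symmetric])
  finally show ?thesis .
qed

lemma shift_0: "x < n \<Longrightarrow> shift x 0 = x" using shift_eq_iff by simp

definition cdiff :: "nat \<Rightarrow> nat \<Rightarrow> nat" where "cdiff x y = nat ((int y - int x) mod int n)"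

lemma int_cdiff: "int (cdiff x y) = (int y - int x) mod int n"
  unfolding cdiff_def using int_n_pos by simp

lemma cdiff_lt: "cdiff x y < n"
  using int_cdiff[of x y] int_n_pos by (metis of_nat_less_iff pos_mod_bound)

lemma cdiff_eq_iff:
  "k < n \<Longrightarrow> cdiff x y = k \<longleftrightarrow> (int y - int x) mod int n = int k"
  using int_cdiff by (metis of_nat_eq_iff)

lemma shift_eq_iff_cdiff:
  "y < n \<Longrightarrow> k < n \<Longrightarrow> (shift x (int k) = y) \<longleftrightarrow> cdiff x y = k"
  using shift_eq_iff cdiff_eq_iff by (simp add: mod_less)

lemma cdiff_add_cdiff:
  "x < n \<Longrightarrow> y < n \<Longrightarrow> x \<noteq> y \<Longrightarrow> cdiff x y + cdiff y x = n \<and> cdiff x y \<ge> 1"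
proof -
  assume a: "x < n" "y < n" "x \<noteq> y"
  have ne: "(int y - int x) mod int n \<noteq> 0"
  proof
    assume "(int y - int x) mod int n = 0"
    then have "int n dvd int y - int x" by (rule mod_0_imp_dvd)
    moreover have "int y - int x \<noteq> 0" using a by simp
    ultimately have "\<bar>int n\<bar> \<le> \<bar>int y - int x\<bar>" by (rule dvd_imp_le_int[rotated])
    then show False using a by linarith
  qed
  have "(int x - int y) mod int n = int n - (int y - int x) mod int n"
    using ne by (metis minus_diff_eq zmod_zminus1_not_zero zmod_zminus1_eq_if)
  hence "int (cdiff y x) = int n - int (cdiff x y)" using int_cdiff by simp
  moreover have "int (cdiff x y) \<noteq> 0" using ne int_cdiff by simp
  ultimately show ?thesis by linarith
qed

lemma cdiff_self: "cdiff x x = 0" unfolding cdiff_def by simp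

lemma shift_cdiff: "y < n \<Longrightarrow> shift x (int (cdiff x y)) = y"
  using shift_eq_iff_cdiff cdiff_lt by blast

lemma cdiff_shift: "k < n \<Longrightarrow> cdiff x (shift x (int k)) = k"
  using shift_eq_iff_cdiff shift_lt by blast

lemma shift_minus_cdiff: "a < n \<Longrightarrow> shift b (- int (cdiff a b)) = a"
proof -
  assume a: "a < n"
  have "(- int (cdiff a b)) mod int n = (- (int b - int a)) mod int n"
    unfolding int_cdiff by (simp add: mod_minus_eq)
  also have "\<dots> = (int a - int b) mod int n" by simp
  finally show ?thesis using shift_eq_iff[OF a] by simp
qed

lemma shift_neq:
  "x < n \<Longrightarrow> 1 \<le> k \<Longrightarrow> k < n \<Longrightarrow> shift x (int k) \<noteq> x"
  using cdiff_shift[of k x] cdiff_self[of x] by auto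

lemma shift_minus_neq:
  "x < n \<Longrightarrow> 1 \<le> k \<Longrightarrow> k < n \<Longrightarrow> shift x (- int k) \<noteq> x"
proof
  assume a: "x < n" "1 \<le> k" "k < n" "shift x (- int k) = x"
  have "shift (shift x (- int k)) (int k) = x" unfolding shift_shift using shift_0 a by simp
  thus False using a shift_neq[of x k] by simp
qed

text \<open>
  \<open>pos_top i x\<close> is the \<open>k\<close> with \<open>x \<equiv> k i (mod n)\<close>, the position of \<open>x\<close> on the Hamiltonian
  cycle \<open>0, i, 2i, \<dots>\<close> formed by \<open>A\<^sub>i\<close>; \<open>pos_bot\<close> numbers \<open>B\<^sub>i\<close> so that the rung of
  \<open>D\<^sub>i\<^sub>-\<^sub>1\<close> at \<open>x\<close> joins equal positions.
\<close>
definition inv_mod :: "nat \<Rightarrow> int" where "inv_mod i = (SOME u. (int i * u) mod int n = 1)"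

lemma inv_mod:
  "1 \<le> i \<Longrightarrow> i < n \<Longrightarrow> (int i * inv_mod i) mod int n = 1"
proof -
  assume i: "1 \<le> i" "i < n"
  have "\<not> n dvd i" using i by (auto dest: dvd_imp_le)
  hence "coprime n i" using prime_n prime_imp_coprime by blast
  hence g: "gcd (int i) (int n) = 1" by (simp add: coprime_commute gcd_int_def)
  obtain u v where "u * int i + v * int n = 1" using bezout_int[of "int i" "int n"] g by auto
  hence "(int i * u) mod int n = 1 mod int n"
    by (metis mod_mult_self1 mult.commute)
  also have "\<dots> = 1" using n_ge3 by simp
  finally have "\<exists>u. (int i * u) mod int n = 1" by blast
  thus ?thesis unfolding inv_mod_def by (rule someI_ex)
qed

definition pos_top :: "nat \<Rightarrow> nat \<Rightarrow> nat" where "pos_top i x = nat ((int x * inv_mod i) mod int n)"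
definition pos_bot :: "nat \<Rightarrow> nat \<Rightarrow> nat" where "pos_bot i y = pos_top i (shift y (1 - int i))"

lemma pos_top_lt: "pos_top i x < n"
  unfolding pos_top_def using int_n_pos
  by (metis nat_less_iff pos_mod_bound pos_mod_sign)

lemma pos_bot_lt: "pos_bot i x < n" unfolding pos_bot_def by (rule pos_top_lt)

lemma pos_top_shift:
  "1 \<le> i \<Longrightarrow> i < n \<Longrightarrow> pos_top i (shift x (m * int i)) = shift (pos_top i x) m"
proof -
  assume i: "1 \<le> i" "i < n"
  have w: "(int i * inv_mod i) mod int n = 1" using inv_mod i by blast
  obtain q where q: "int i * inv_mod i = 1 + int n * q"
    using w by (metis mod_mult_div_eq add.commute mult.commute)
  have "int (pos_top i (shift x (m * int i))) = ((int x + m * int i) mod int n * inv_mod i) mod int n"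
    unfolding pos_top_def using int_shift int_n_pos by simp
  also have "\<dots> = ((int x + m * int i) * inv_mod i) mod int n" by (simp add: mod_mult_left_eq)
  also have "(int x + m * int i) * inv_mod i = int x * inv_mod i + m * (int i * inv_mod i)"
    by (simp add: algebra_simps)
  also have "\<dots> = int x * inv_mod i + m + int n * (m * q)"
    unfolding q by (simp add: algebra_simps)
  also have "(int x * inv_mod i + m + int n * (m * q)) mod int n = (int x * inv_mod i + m) mod int n"
    by simp
  also have "\<dots> = ((int x * inv_mod i) mod int n + m) mod int n" by (simp add: mod_add_left_eq)
  also have "\<dots> = int (shift (pos_top i x) m)"
    unfolding int_shift pos_top_def using int_n_pos by simp
  finally show ?thesis by simp
qed

lemma pos_bot_shift:
  "1 \<le> i \<Longrightarrow> i < n \<Longrightarrow> pos_bot i (shift y (m * int i)) = shift (pos_bot i y) m"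
proof -
  assume i: "1 \<le> i" "i < n"
  have "pos_bot i (shift y (m * int i)) = pos_top i (shift y (m * int i + (1 - int i)))"
    unfolding pos_bot_def shift_shift by simp
  also have "\<dots> = pos_top i (shift (shift y (1 - int i)) (m * int i))"
    unfolding shift_shift by (simp add: add.commute)
  also have "\<dots> = shift (pos_bot i y) m" unfolding pos_bot_def using pos_top_shift i by blast
  finally show ?thesis .
qed

lemma shift_1: "k < n \<Longrightarrow> shift k 1 = (if k = n - 1 then 0 else k + 1)"
proof (cases "k = n - 1")
  case True
  assume k: "k < n"
  have "(int 0 - int k) mod int n = 1 mod int n"
    using True n_ge3 by (simp add: of_nat_diff mod_diff_right_eq[symmetric])
  hence "shift k 1 = 0" using shift_eq_iff[of 0 k 1] int_n_pos by simp
  thus ?thesis using True by simp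
next
  case False
  assume k: "k < n"
  have "shift k 1 = k + 1" using shift_eq_iff[of "k+1" k 1] False k by simp
  thus ?thesis using False by simp
qed

lemma shift_minus_1: "k < n \<Longrightarrow> shift k (-1) = (if k = 0 then n - 1 else k - 1)"
proof (cases "k = 0")
  case True
  assume k: "k < n"
  have "(int (n-1) - int k) mod int n = (-1) mod int n"
    using True n_ge3 by (simp add: of_nat_diff)
  hence "shift k (-1) = n - 1" using shift_eq_iff[of "n-1" k "-1"] n_ge3 by simp
  thus ?thesis using True by simp
next
  case False
  assume k: "k < n"
  have "shift k (-1) = k - 1" using shift_eq_iff[of "k-1" k "-1"] False k by (simp add: of_nat_diff)
  thus ?thesis using False by simp
qed

text \<open>
  \<open>step j k\<close>: the edge of colour \<open>j\<close> at position \<open>k\<close> of the prism leads forward (1) or backward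
  (\<open>-1\<close>) along the cycle, or across the rung (0).
\<close>
definition step :: "nat \<Rightarrow> nat \<Rightarrow> int" where
  "step j k = (if j = 1 then (if k = n - 1 then 0 else if even k then 1 else -1)
     else if j = 2 then (if k = 0 then 0 else if odd k then 1 else -1)
     else (if k = 0 then -1 else if k = n - 1 then 1 else 0))"

definition cycle_colour :: "nat \<Rightarrow> nat" where
  "cycle_colour k = (if k = n - 1 then 3 else if even k then 1 else 2)"
definition rung_colour :: "nat \<Rightarrow> nat" where
  "rung_colour k = (if k = 0 then 2 else if k = n - 1 then 1 else 3)"

lemma even_n_minus_1: "even (n - 1)" using odd_n n_ge3 by simp

lemma step_cycle_colour: "k < n \<Longrightarrow> step (cycle_colour k) k = 1"
  using even_n_minus_1 n_ge3 unfolding step_def cycle_colour_def by auto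

lemma step_rung_colour: "k < n \<Longrightarrow> step (rung_colour k) k = 0"
  using even_n_minus_1 n_ge3 unfolding step_def rung_colour_def by auto

lemma cycle_colour_range: "cycle_colour k \<in> {1,2,3}" unfolding cycle_colour_def by auto
lemma rung_colour_range: "rung_colour k \<in> {1,2,3}" unfolding rung_colour_def by auto

lemma step_eq_1_imp:
  "j \<in> {1,2,3} \<Longrightarrow> k < n \<Longrightarrow> step j k = 1 \<Longrightarrow> cycle_colour k = j"
  using even_n_minus_1 n_ge3 unfolding step_def cycle_colour_def by (auto split: if_splits)

lemma step_eq_0_imp:
  "j \<in> {1,2,3} \<Longrightarrow> k < n \<Longrightarrow> step j k = 0 \<Longrightarrow> rung_colour k = j"
  using even_n_minus_1 n_ge3 unfolding step_def rung_colour_def by (auto split: if_splits)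

lemma step_cases: "step j k = 0 \<or> step j k = 1 \<or> step j k = -1"
  unfolding step_def by auto

lemma step_forward_next:
  "j \<in> {1,2,3} \<Longrightarrow> k < n \<Longrightarrow> step j k = 1 \<Longrightarrow> step j (shift k 1) = -1"
proof -
  assume j: "j \<in> {1,2,3}" and k: "k < n" and m: "step j k = 1"
  show ?thesis
  proof (cases "k = n - 1")
    case True
    then show ?thesis using j m shift_1[OF k] n_ge3 odd_n even_n_minus_1 unfolding step_def by auto
  next
    case False
    hence s: "shift k 1 = k + 1" using shift_1[OF k] by simp
    consider "j = 1" | "j = 2" | "j = 3" using j by auto
    then show ?thesis
    proof cases
      case 1
      hence "even k" using m False by (simp add: step_def split: if_splits)
      hence "k + 1 \<noteq> n - 1" "odd (k+1)" using even_n_minus_1 by presburger+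
      thus ?thesis using 1 s unfolding step_def by simp
    next
      case 2
      hence "odd k" using m by (simp add: step_def split: if_splits)
      hence "even (k+1)" by simp
      thus ?thesis using 2 s unfolding step_def by simp
    next
      case 3
      thus ?thesis using m False by (simp add: step_def split: if_splits)
    qed
  qed
qed

lemma step_backward_prev:
  "j \<in> {1,2,3} \<Longrightarrow> k < n \<Longrightarrow> step j k = -1 \<Longrightarrow> step j (shift k (-1)) = 1"
proof -
  assume j: "j \<in> {1,2,3}" and k: "k < n" and m: "step j k = -1"
  show ?thesis
  proof (cases "k = 0")
    case True
    then show ?thesis using j m shift_minus_1[OF k] n_ge3 odd_n even_n_minus_1 unfolding step_def by auto
  next
    case False
    hence s: "shift k (-1) = k - 1" using shift_minus_1[OF k] by simp
    consider "j = 1" | "j = 2" | "j = 3" using j by auto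
    then show ?thesis
    proof cases
      case 1
      hence "odd k" "k \<noteq> n - 1" using m by (simp_all add: step_def split: if_splits)
      hence "k - 1 \<noteq> n - 1" "even (k - 1)" using k by presburger+
      thus ?thesis using 1 s unfolding step_def by simp
    next
      case 2
      hence "even k" using m False by (simp add: step_def split: if_splits)
      hence "odd (k - 1)" "k - 1 \<noteq> 0" using False by presburger+
      thus ?thesis using 2 s unfolding step_def by simp
    next
      case 3
      thus ?thesis using m False by (simp add: step_def split: if_splits)
    qed
  qed
qed

section \<open>The colouring of the prisms\<close>

definition chord :: "nat \<Rightarrow> nat \<Rightarrow> nat" where "chord x y = min (cdiff x y) (cdiff y x)"

text \<open>
  Colours \<open>(i, j)\<close> with \<open>1 \<le> i \<le> h\<close> are the colour classes of the prism \<open>A\<^sub>i \<union> B\<^sub>i \<union> D\<^sub>i\<^sub>-\<^sub>1\<close>,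
  colours \<open>(0, k)\<close> with \<open>h \<le> k\<close> the matchings \<open>D\<^sub>k\<close>.  A cycle edge is coloured at the position of
  its endpoint from which it goes forward.
\<close>
definition cycle_edge_colour :: "(nat \<Rightarrow> nat \<Rightarrow> nat) \<Rightarrow> nat \<Rightarrow> nat \<Rightarrow> nat \<times> nat" where
  "cycle_edge_colour pos x y =
     (let i = chord x y in (i, cycle_colour (pos i (if cdiff x y = i then x else y))))"

definition colour :: "nat \<Rightarrow> nat \<Rightarrow> nat \<times> nat" where
  "colour x y =
     (if x < n \<and> y < n then cycle_edge_colour pos_top x y
      else if n \<le> x \<and> n \<le> y then cycle_edge_colour pos_bot (x - n) (y - n)
      else let a = min x y; d = cdiff a (max x y - n) in
        if h \<le> d then (0, d) else (d + 1, rung_colour (pos_top (d + 1) a)))"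

definition partner :: "nat \<times> nat \<Rightarrow> nat \<Rightarrow> nat" where
  "partner = (\<lambda>(i, j) v.
     if i = 0 then (if v < n then n + shift v (int j) else shift (v - n) (- int j))
     else if v < n then
       (let s = step j (pos_top i v) in if s = 0 then n + shift v (int i - 1) else shift v (s * int i))
     else
       (let s = step j (pos_bot i (v - n)) in
        if s = 0 then shift (v - n) (1 - int i) else n + shift (v - n) (s * int i)))"

definition colours :: "(nat \<times> nat) set" where "colours = ({1..h} \<times> {1,2,3}) \<union> ({0} \<times> {h..n-1})"

lemma partner_top:
  "i \<ge> 1 \<Longrightarrow> x < n \<Longrightarrow> partner (i,j) x =
    (if step j (pos_top i x) = 0 then n + shift x (int i - 1) else shift x (step j (pos_top i x) * int i))"
  unfolding partner_def by (simp add: Let_def)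

lemma partner_bot:
  "i \<ge> 1 \<Longrightarrow> n \<le> v \<Longrightarrow> partner (i,j) v =
    (if step j (pos_bot i (v-n)) = 0 then shift (v-n) (1 - int i)
     else n + shift (v-n) (step j (pos_bot i (v-n)) * int i))"
  unfolding partner_def by (simp add: Let_def)

lemma partner_diag_top: "x < n \<Longrightarrow> partner (0,k) x = n + shift x (int k)"
  unfolding partner_def by simp
lemma partner_diag_bot: "n \<le> v \<Longrightarrow> partner (0,k) v = shift (v - n) (- int k)"
  unfolding partner_def by simp

lemma colour_top:
  "x < n \<Longrightarrow> y < n \<Longrightarrow> colour x y =
    (chord x y, cycle_colour (if cdiff x y = chord x y then pos_top (chord x y) x else pos_top (chord x y) y))"
  unfolding colour_def cycle_edge_colour_def by (simp add: Let_def)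

lemma colour_bot:
  "n \<le> x \<Longrightarrow> n \<le> y \<Longrightarrow> colour x y =
    (chord (x-n) (y-n), cycle_colour (if cdiff (x-n) (y-n) = chord (x-n) (y-n)
       then pos_bot (chord (x-n) (y-n)) (x-n) else pos_bot (chord (x-n) (y-n)) (y-n)))"
  unfolding colour_def cycle_edge_colour_def using n_ge3 by (simp add: Let_def)

lemma colour_top_bot:
  "x < n \<Longrightarrow> n \<le> y \<Longrightarrow> colour x y =
    (if h \<le> cdiff x (y-n) then (0, cdiff x (y-n))
     else (cdiff x (y-n) + 1, rung_colour (pos_top (cdiff x (y-n) + 1) x)))"
  unfolding colour_def by (simp add: Let_def min_def max_def)

lemma colour_bot_top:
  "y < n \<Longrightarrow> n \<le> x \<Longrightarrow> colour x y =
    (if h \<le> cdiff y (x-n) then (0, cdiff y (x-n))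
     else (cdiff y (x-n) + 1, rung_colour (pos_top (cdiff y (x-n) + 1) y)))"
  unfolding colour_def by (simp add: Let_def min_def max_def)

lemma chord_props:
  "x < n \<Longrightarrow> y < n \<Longrightarrow> x \<noteq> y \<Longrightarrow>
    1 \<le> chord x y \<and> chord x y \<le> h \<and> (cdiff x y = chord x y \<or> cdiff y x = chord x y) \<and>
    \<not> (cdiff x y = chord x y \<and> cdiff y x = chord x y)"
proof -
  assume a: "x < n" "y < n" "x \<noteq> y"
  have s: "cdiff x y + cdiff y x = n" "cdiff x y \<ge> 1" "cdiff y x \<ge> 1" using cdiff_add_cdiff a by (metis add.commute)+
  show ?thesis unfolding chord_def using s n_eq by (auto simp: min_def; presburger)
qed

lemma chord_eq_iff:
  "x < n \<Longrightarrow> y < n \<Longrightarrow> x \<noteq> y \<Longrightarrow> 1 \<le> i \<Longrightarrow> i \<le> h \<Longrightarrow>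
   chord x y = i \<longleftrightarrow> (cdiff x y = i \<or> cdiff y x = i)"
proof -
  assume a: "x < n" "y < n" "x \<noteq> y" "1 \<le> i" "i \<le> h"
  have s: "cdiff x y + cdiff y x = n" using cdiff_add_cdiff a by blast
  show ?thesis unfolding chord_def using s n_eq a by (auto simp: min_def)
qed

lemma chord_commute: "chord x y = chord y x" unfolding chord_def by simp

lemma colour_commute: "x < 2*n \<Longrightarrow> y < 2*n \<Longrightarrow> colour x y = colour y x"
proof -
  assume "x < 2*n" "y < 2*n"
  consider "x < n \<and> y < n" | "n \<le> x \<and> n \<le> y" | "x < n \<and> n \<le> y" | "y < n \<and> n \<le> x" by linarith
  then show ?thesis
  proof cases
    case 1
    show ?thesis
    proof (cases "x = y")
      case False
      thus ?thesis using 1 chord_props[of x y] colour_top[of x y] colour_top[of y x] chord_commute[of x y] by auto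
    qed simp
  next
    case 2
    show ?thesis
    proof (cases "x = y")
      case False
      hence "x - n \<noteq> y - n" using 2 by arith
      moreover have "x - n < n" "y - n < n" using \<open>x < 2*n\<close> \<open>y < 2*n\<close> by auto
      ultimately show ?thesis using 2 chord_props[of "x-n" "y-n"] colour_bot[of x y] colour_bot[of y x] chord_commute[of "x-n" "y-n"] by auto
    qed simp
  next
    case 3 thus ?thesis using colour_top_bot colour_bot_top by simp
  next
    case 4 thus ?thesis using colour_top_bot colour_bot_top by simp
  qed
qed

lemma chord_shift:
  assumes x: "x < n" and i: "1 \<le> i" "i \<le> h"
  shows "shift x (int i) \<noteq> x \<and> cdiff x (shift x (int i)) = i \<and> chord x (shift x (int i)) = i"
proof -
  have iN: "i < n" using i n_eq by simp
  then have "shift x (int i) \<noteq> x" "cdiff x (shift x (int i)) = i"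
    using shift_neq[OF x i(1)] cdiff_shift by auto
  then show ?thesis using chord_eq_iff[OF x shift_lt _ i] by auto
qed

lemma chord_shift_minus:
  assumes x: "x < n" and i: "1 \<le> i" "i \<le> h"
  shows "shift x (- int i) \<noteq> x \<and> cdiff x (shift x (- int i)) \<noteq> i \<and> chord x (shift x (- int i)) = i"
proof -
  let ?y = "shift x (- int i)"
  have iN: "i < n" using i n_eq by simp
  have yx: "?y \<noteq> x" using shift_minus_neq x i iN by simp
  have "shift ?y (int i) = x" unfolding shift_shift using shift_0 x by simp
  then have "cdiff ?y x = i" using shift_eq_iff_cdiff[OF x iN] by simp
  moreover from this have "chord x ?y = i" using chord_eq_iff[OF x shift_lt yx[symmetric] i] by simp
  ultimately show ?thesis using chord_props[OF x shift_lt yx[symmetric]] yx by auto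
qed

lemma colour_in_colours:
  "x < 2*n \<Longrightarrow> y < 2*n \<Longrightarrow> x \<noteq> y \<Longrightarrow> colour x y \<in> colours"
proof -
  assume a: "x < 2*n" "y < 2*n" "x \<noteq> y"
  consider "x < n \<and> y < n" | "n \<le> x \<and> n \<le> y" | "x < n \<and> n \<le> y" | "y < n \<and> n \<le> x" by linarith
  then show ?thesis
  proof cases
    case 1
    thus ?thesis using chord_props[of x y] a colour_top[of x y] cycle_colour_range unfolding colours_def by auto
  next
    case 2
    hence "x - n < n" "y - n < n" "x - n \<noteq> y - n" using a by arith+
    thus ?thesis using chord_props[of "x-n" "y-n"] 2 colour_bot[of x y] cycle_colour_range unfolding colours_def by auto
  next
    case 3
    thus ?thesis using colour_top_bot[of x y] cdiff_lt[of x "y-n"] rung_colour_range n_eq unfolding colours_def by auto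
  next
    case 4
    thus ?thesis using colour_bot_top[of y x] cdiff_lt[of y "x-n"] rung_colour_range n_eq unfolding colours_def by auto
  qed
qed

lemma partner_top_props:
  assumes i: "1 \<le> i" "i \<le> h" and j: "j \<in> {1,2,3}" and x: "x < n"
  shows "partner (i,j) x < 2*n \<and> partner (i,j) x \<noteq> x \<and> colour x (partner (i,j) x) = (i,j)"
proof -
  have iN: "i < n" using i n_eq by simp
  define k where "k = pos_top i x"
  have kn: "k < n" unfolding k_def by (rule pos_top_lt)
  consider "step j k = 0" | "step j k = 1" | "step j k = -1" using step_cases by blast
  then show ?thesis
  proof cases
    case 1
    define s where "s = shift x (int i - 1)"
    have p: "partner (i,j) x = n + s" using partner_top[OF i(1) x] 1 unfolding k_def s_def by simp
    have sn: "s < n" unfolding s_def by (rule shift_lt)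
    have "int (i - 1) = int i - 1" using i by simp
    hence "cdiff x s = i - 1" using cdiff_shift[of "i-1" x] iN unfolding s_def by simp
    hence "colour x (n + s) = (i, rung_colour k)" using colour_top_bot[of x "n+s"] x i unfolding k_def by simp
    moreover have "rung_colour k = j" using step_eq_0_imp[OF j kn 1] .
    ultimately show ?thesis using p sn x by simp
  next
    case 2
    have "colour x (shift x (int i)) = (i, cycle_colour k)"
      using colour_top[OF x shift_lt] chord_shift[OF x i] unfolding k_def by simp
    then show ?thesis using partner_top[OF i(1) x] 2 chord_shift[OF x i] shift_lt[of x "int i"]
        step_eq_1_imp[OF j kn 2]
      unfolding k_def by simp
  next
    case 3
    have "pos_top i (shift x (- int i)) = shift k (-1)"
      unfolding k_def using pos_top_shift[OF i(1) iN, of x "-1"] by simp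
    then have "colour x (shift x (- int i)) = (i, cycle_colour (shift k (-1)))"
      using colour_top[OF x shift_lt] chord_shift_minus[OF x i] by simp
    moreover have "cycle_colour (shift k (-1)) = j"
      using step_eq_1_imp[OF j shift_lt step_backward_prev[OF j kn 3]] .
    ultimately show ?thesis using partner_top[OF i(1) x] 3 chord_shift_minus[OF x i] shift_lt[of x "- int i"]
      unfolding k_def by simp
  qed
qed

lemma partner_bot_props:
  assumes i: "1 \<le> i" "i \<le> h" and j: "j \<in> {1,2,3}" and v: "n \<le> v" "v < 2*n"
  shows "partner (i,j) v < 2*n \<and> partner (i,j) v \<noteq> v \<and> colour v (partner (i,j) v) = (i,j)"
proof -
  have iN: "i < n" using i n_eq by simp
  define b where "b = v - n"
  have bn: "b < n" using v unfolding b_def by simp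
  have vb: "v = n + b" using v unfolding b_def by simp
  define k where "k = pos_bot i b"
  have kn: "k < n" unfolding k_def by (rule pos_bot_lt)
  consider "step j k = 0" | "step j k = 1" | "step j k = -1" using step_cases by blast
  then show ?thesis
  proof cases
    case 1
    define t where "t = shift b (1 - int i)"
    have p: "partner (i,j) v = t" using partner_bot[OF i(1) v(1)] 1 unfolding k_def t_def b_def by simp
    have tn: "t < n" unfolding t_def by (rule shift_lt)
    have "int (i - 1) = int i - 1" using i by simp
    hence "shift t (int (i - 1)) = b" unfolding t_def shift_shift using shift_0 bn by simp
    hence d: "cdiff t b = i - 1" using shift_eq_iff_cdiff[OF bn] iN by simp
    have "pos_top i t = k" unfolding t_def k_def pos_bot_def ..
    hence "colour v t = (i, rung_colour k)" using colour_bot_top[of t v] tn v i d unfolding b_def by simp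
    moreover have "rung_colour k = j" using step_eq_0_imp[OF j kn 1] .
    ultimately show ?thesis using p tn v by simp
  next
    case 2
    have "colour v (n + shift b (int i)) = (i, cycle_colour k)"
      using colour_bot[of v "n + shift b (int i)"] v chord_shift[OF bn i] unfolding k_def b_def by simp
    then show ?thesis using partner_bot[OF i(1) v(1)] 2 chord_shift[OF bn i] shift_lt[of b "int i"]
        step_eq_1_imp[OF j kn 2] vb
      unfolding k_def b_def by simp
  next
    case 3
    have "pos_bot i (shift b (- int i)) = shift k (-1)"
      unfolding k_def using pos_bot_shift[OF i(1) iN, of b "-1"] by simp
    then have "colour v (n + shift b (- int i)) = (i, cycle_colour (shift k (-1)))"
      using colour_bot[of v "n + shift b (- int i)"] v chord_shift_minus[OF bn i] unfolding b_def by simp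
    moreover have "cycle_colour (shift k (-1)) = j"
      using step_eq_1_imp[OF j shift_lt step_backward_prev[OF j kn 3]] .
    ultimately show ?thesis using partner_bot[OF i(1) v(1)] 3 chord_shift_minus[OF bn i] shift_lt[of b "- int i"] vb
      unfolding k_def b_def by simp
  qed
qed

lemma partner_diag_props:
  assumes k: "h \<le> k" "k \<le> n - 1" and v: "v < 2*n"
  shows "partner (0,k) v < 2*n \<and> partner (0,k) v \<noteq> v \<and> colour v (partner (0,k) v) = (0,k)"
proof (cases "v < n")
  case True
  have kn: "k < n" using k n_ge3 by simp
  have "cdiff v (shift v (int k)) = k" using cdiff_shift kn by simp
  thus ?thesis using partner_diag_top[OF True] colour_top_bot[of v "n + shift v (int k)"] True k shift_lt[of v "int k"] by simp
next
  case False
  define b where "b = v - n"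
  have bn: "b < n" using v False unfolding b_def by simp
  have kn: "k < n" using k n_ge3 by simp
  define t where "t = shift b (- int k)"
  have tn: "t < n" unfolding t_def by (rule shift_lt)
  have "shift t (int k) = b" unfolding t_def shift_shift using shift_0 bn by simp
  hence d: "cdiff t b = k" using shift_eq_iff_cdiff[OF bn kn] by simp
  have p: "partner (0,k) v = t" using partner_diag_bot False unfolding t_def b_def by simp
  show ?thesis using p colour_bot_top[of t v] tn False d k v unfolding b_def by simp
qed

lemma colour_partner_top:
  assumes x: "x < n" and y: "y < n" and xy: "x \<noteq> y"
  shows "partner (colour x y) x = y"
proof -
  define i where "i = chord x y"
  have i: "1 \<le> i" "i \<le> h" using chord_props[OF x y xy] unfolding i_def by auto
  have iN: "i < n" using i n_eq by simp
  show ?thesis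
  proof (cases "cdiff x y = i")
    case True
    define j where "j = cycle_colour (pos_top i x)"
    have c: "colour x y = (i,j)" using colour_top[OF x y] True unfolding i_def j_def by simp
    have m: "step j (pos_top i x) = 1" unfolding j_def using step_cycle_colour pos_top_lt by blast
    have "partner (i,j) x = shift x (int i)" using partner_top[OF i(1) x] m by simp
    also have "\<dots> = y" using shift_eq_iff_cdiff[OF y iN] True by simp
    finally show ?thesis using c by simp
  next
    case False
    hence d: "cdiff y x = i" using chord_props[OF x y xy] unfolding i_def by auto
    define j where "j = cycle_colour (pos_top i y)"
    have c: "colour x y = (i,j)" using colour_top[OF x y] False unfolding i_def j_def by simp
    have jr: "j \<in> {1,2,3}" unfolding j_def by (rule cycle_colour_range)
    have m: "step j (pos_top i y) = 1" unfolding j_def using step_cycle_colour pos_top_lt by blast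
    have xs: "x = shift y (int i)" using shift_eq_iff_cdiff[OF x iN, of y] d by metis
    have "pos_top i x = shift (pos_top i y) 1" using xs pos_top_shift[OF i(1) iN, of y 1] by simp
    hence m': "step j (pos_top i x) = -1" using step_forward_next[OF jr pos_top_lt m] by simp
    have "partner (i,j) x = shift x (- int i)" using partner_top[OF i(1) x] m' by simp
    also have "\<dots> = y" unfolding xs shift_shift using shift_0 y by simp
    finally show ?thesis using c by simp
  qed
qed

lemma colour_partner_bot:
  assumes x: "n \<le> x" "x < 2*n" and y: "n \<le> y" "y < 2*n" and xy: "x \<noteq> y"
  shows "partner (colour x y) x = y"
proof -
  define a where "a = x - n"
  define b where "b = y - n"
  have an: "a < n" "x = n + a" using x unfolding a_def by auto
  have bn: "b < n" "y = n + b" using y unfolding b_def by auto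
  have ab: "a \<noteq> b" using xy an bn by auto
  define i where "i = chord a b"
  have i: "1 \<le> i" "i \<le> h" using chord_props[OF an(1) bn(1) ab] unfolding i_def by auto
  have iN: "i < n" using i n_eq by simp
  show ?thesis
  proof (cases "cdiff a b = i")
    case True
    define j where "j = cycle_colour (pos_bot i a)"
    have c: "colour x y = (i,j)" using colour_bot[OF x(1) y(1)] True unfolding i_def j_def a_def b_def by simp
    have m: "step j (pos_bot i a) = 1" unfolding j_def using step_cycle_colour pos_bot_lt by blast
    have "partner (i,j) x = n + shift a (int i)" using partner_bot[OF i(1) x(1)] m unfolding a_def by simp
    also have "\<dots> = y" using shift_eq_iff_cdiff[OF bn(1) iN] True bn by simp
    finally show ?thesis using c by simp
  next
    case False
    hence d: "cdiff b a = i" using chord_props[OF an(1) bn(1) ab] unfolding i_def by auto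
    define j where "j = cycle_colour (pos_bot i b)"
    have c: "colour x y = (i,j)" using colour_bot[OF x(1) y(1)] False unfolding i_def j_def a_def b_def by simp
    have jr: "j \<in> {1,2,3}" unfolding j_def by (rule cycle_colour_range)
    have m: "step j (pos_bot i b) = 1" unfolding j_def using step_cycle_colour pos_bot_lt by blast
    have xs: "a = shift b (int i)" using shift_eq_iff_cdiff[OF an(1) iN, of b] d by metis
    have "pos_bot i a = shift (pos_bot i b) 1" using xs pos_bot_shift[OF i(1) iN, of b 1] by simp
    hence m': "step j (pos_bot i a) = -1" using step_forward_next[OF jr pos_bot_lt m] by simp
    have "partner (i,j) x = n + shift a (- int i)" using partner_bot[OF i(1) x(1)] m' unfolding a_def by simp
    also have "\<dots> = y" unfolding xs shift_shift using shift_0 bn by simp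
    finally show ?thesis using c by simp
  qed
qed

lemma colour_partner_top_bot:
  assumes x: "x < n" and y: "n \<le> y" "y < 2*n"
  shows "partner (colour x y) x = y"
proof -
  define b where "b = y - n"
  have bn: "b < n" "y = n + b" using y unfolding b_def by auto
  define m where "m = cdiff x b"
  show ?thesis
  proof (cases "h \<le> m")
    case True
    have "colour x y = (0, m)" using colour_top_bot[OF x y(1)] True unfolding m_def b_def by simp
    thus ?thesis using partner_diag_top[OF x] shift_cdiff[OF bn(1)] bn unfolding m_def by simp
  next
    case False
    define j where "j = rung_colour (pos_top (m+1) x)"
    have c: "colour x y = (m+1, j)" using colour_top_bot[OF x y(1)] False unfolding m_def b_def j_def by simp
    have mv: "step j (pos_top (m+1) x) = 0" unfolding j_def using step_rung_colour pos_top_lt by blast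
    have "partner (m+1, j) x = n + shift x (int m)" using partner_top[of "m+1" x j] x mv by simp
    thus ?thesis using c shift_cdiff[OF bn(1)] bn unfolding m_def by simp
  qed
qed

lemma colour_partner_bot_top:
  assumes x: "n \<le> x" "x < 2*n" and y: "y < n"
  shows "partner (colour x y) x = y"
proof -
  define b where "b = x - n"
  have bn: "b < n" "x = n + b" using x unfolding b_def by auto
  define m where "m = cdiff y b"
  show ?thesis
  proof (cases "h \<le> m")
    case True
    have "colour x y = (0, m)" using colour_bot_top[OF y x(1)] True unfolding m_def b_def by simp
    thus ?thesis using partner_diag_bot[OF x(1)] shift_minus_cdiff[OF y, of b] unfolding m_def b_def by simp
  next
    case False
    define j where "j = rung_colour (pos_top (m+1) y)"
    have c: "colour x y = (m+1, j)" using colour_bot_top[OF y x(1)] False unfolding m_def b_def j_def by simp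
    have e: "pos_bot (m+1) b = pos_top (m+1) y" unfolding pos_bot_def using shift_minus_cdiff[OF y, of b] unfolding m_def by simp
    have mv: "step j (pos_bot (m+1) b) = 0" unfolding e j_def using step_rung_colour pos_top_lt by blast
    have "partner (m+1, j) x = shift b (- int m)" using partner_bot[of "m+1" x j] x mv unfolding b_def by simp
    thus ?thesis using c shift_minus_cdiff[OF y, of b] unfolding m_def by simp
  qed
qed

lemma colour_partner:
  "x < 2*n \<Longrightarrow> y < 2*n \<Longrightarrow> x \<noteq> y \<Longrightarrow> colour x y \<in> colours \<and> partner (colour x y) x = y"
  using colour_in_colours colour_partner_top colour_partner_bot colour_partner_top_bot colour_partner_bot_top by (metis not_le)

lemma partner_props:
  "c \<in> colours \<Longrightarrow> v < 2*n \<Longrightarrow> partner c v < 2*n \<and> partner c v \<noteq> v \<and> colour v (partner c v) = c"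
proof -
  assume c: "c \<in> colours" and v: "v < 2*n"
  obtain i j where ij: "c = (i,j)" by force
  show ?thesis
  proof (cases "i = 0")
    case True
    thus ?thesis using c ij partner_diag_props[OF _ _ v] unfolding colours_def by auto
  next
    case False
    hence i: "1 \<le> i" "i \<le> h" "j \<in> {1,2,3}" using c ij unfolding colours_def by auto
    show ?thesis
    proof (cases "v < n")
      case True thus ?thesis using partner_top_props[OF i True] ij by simp
    next
      case False thus ?thesis using partner_bot_props[OF i _ v] ij by simp
    qed
  qed
qed

lemma card_colours: "card colours = 2*n - 1"
proof -
  have d: "({1..h} \<times> {1,2,3::nat}) \<inter> ({0::nat} \<times> {h..n-1}) = {}" by auto
  have "card colours = card ({1..h} \<times> {1,2,3::nat}) + card ({0::nat} \<times> {h..n-1})"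
    unfolding colours_def by (rule card_Un_disjoint) (auto simp: d)
  also have "\<dots> = h * 3 + (n - h)" using n_eq by (simp add: card_cartesian_product)
  also have "\<dots> = 2*n - 1" using n_eq by simp
  finally show ?thesis .
qed

sublocale colouring: edge_colouring n colours colour partner
  by unfold_locales (use card_colours colour_commute partner_props colour_partner n_ge3 in auto)

lemma doubleton_in_A_cls_iff:
  "k < n \<Longrightarrow> {x,y} \<in> A_cls n k \<longleftrightarrow> x < n \<and> y < n \<and> (cdiff x y = k \<or> cdiff y x = k)"
proof -
  assume k: "k < n"
  have e: "\<And>a b. (int b - int a) mod int n = int k mod int n \<longleftrightarrow> cdiff a b = k"
    using cdiff_eq_iff[OF k] k by simp
  show ?thesis unfolding A_cls_def doubleton_in_doubletons_iff e by blast
qed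

lemma doubleton_in_B_cls_iff:
  "k < n \<Longrightarrow> {x,y} \<in> B_cls n k \<longleftrightarrow> n \<le> x \<and> x < 2*n \<and> n \<le> y \<and> y < 2*n \<and>
    (cdiff (x-n) (y-n) = k \<or> cdiff (y-n) (x-n) = k)"
proof -
  assume k: "k < n"
  have e: "(int b - int a) mod int n = int k mod int n \<longleftrightarrow> cdiff (a-n) (b-n) = k" if "n \<le> a" "n \<le> b" for a b
  proof -
    have d: "int b - int a = int (b-n) - int (a-n)" using that by (simp add: of_nat_diff)
    show ?thesis unfolding d using cdiff_eq_iff[OF k, of "a-n" "b-n"] k by simp
  qed
  have "{x,y} \<in> B_cls n k \<longleftrightarrow>
     (n \<le> x \<and> x < 2*n \<and> n \<le> y \<and> y < 2*n \<and> (int y - int x) mod int n = int k mod int n) \<or>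
     (n \<le> y \<and> y < 2*n \<and> n \<le> x \<and> x < 2*n \<and> (int x - int y) mod int n = int k mod int n)"
    unfolding B_cls_def by (rule doubleton_in_doubletons_iff)
  also have "\<dots> \<longleftrightarrow> (n \<le> x \<and> x < 2*n \<and> n \<le> y \<and> y < 2*n \<and> cdiff (x-n) (y-n) = k) \<or>
     (n \<le> y \<and> y < 2*n \<and> n \<le> x \<and> x < 2*n \<and> cdiff (y-n) (x-n) = k)"
    using e[of x y] e[of y x] by blast
  finally show ?thesis by blast
qed

lemma doubleton_in_D_cls_iff:
  "k < n \<Longrightarrow> {x,y} \<in> D_cls n k \<longleftrightarrow>
    (x < n \<and> n \<le> y \<and> y < 2*n \<and> cdiff x (y-n) = k) \<or> (y < n \<and> n \<le> x \<and> x < 2*n \<and> cdiff y (x-n) = k)"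
proof -
  assume k: "k < n"
  have e: "(int b - int a) mod int n = int k mod int n \<longleftrightarrow> cdiff a (b-n) = k" if "n \<le> b" for a b
  proof -
    have "int b - int a = (int (b-n) - int a) + int n" using that by simp
    then have d: "(int b - int a) mod int n = (int (b-n) - int a) mod int n" by (metis mod_add_self2)
    show ?thesis unfolding d using cdiff_eq_iff[OF k, of a "b-n"] k by simp
  qed
  have "{x,y} \<in> D_cls n k \<longleftrightarrow>
     (x < n \<and> n \<le> y \<and> y < 2*n \<and> (int y - int x) mod int n = int k mod int n) \<or>
     (y < n \<and> n \<le> x \<and> x < 2*n \<and> (int x - int y) mod int n = int k mod int n)"
    unfolding D_cls_def by (rule doubleton_in_doubletons_iff)
  also have "\<dots> \<longleftrightarrow> (x < n \<and> n \<le> y \<and> y < 2*n \<and> cdiff x (y-n) = k) \<or> (y < n \<and> n \<le> x \<and> x < 2*n \<and> cdiff y (x-n) = k)"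
    using e[of y x] e[of x y] by blast
  finally show ?thesis .
qed

lemma fst_colour_eq_iff:
  assumes x: "x < 2*n" and y: "y < 2*n" and xy: "x \<noteq> y" and i: "1 \<le> i" "i \<le> h"
  shows "fst (colour x y) = i \<longleftrightarrow> {x,y} \<in> A_cls n i \<union> B_cls n i \<union> D_cls n (i - 1)"
proof -
  have iN: "i < n" "i - 1 < n" using i n_eq by auto
  consider "x < n \<and> y < n" | "n \<le> x \<and> n \<le> y" | "x < n \<and> n \<le> y" | "y < n \<and> n \<le> x" by linarith
  then show ?thesis
  proof cases
    case 1
    have "fst (colour x y) = chord x y" using colour_top 1 by simp
    moreover have "{x,y} \<notin> B_cls n i" "{x,y} \<notin> D_cls n (i-1)" using doubleton_in_B_cls_iff[OF iN(1)] doubleton_in_D_cls_iff[OF iN(2)] 1 by auto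
    ultimately show ?thesis using doubleton_in_A_cls_iff[OF iN(1)] chord_eq_iff[OF _ _ xy i] 1 by auto
  next
    case 2
    have ab: "x - n < n" "y - n < n" "x - n \<noteq> y - n" using 2 x y xy by arith+
    have "fst (colour x y) = chord (x-n) (y-n)" using colour_bot 2 by simp
    moreover have "{x,y} \<notin> A_cls n i" "{x,y} \<notin> D_cls n (i-1)" using doubleton_in_A_cls_iff[OF iN(1)] doubleton_in_D_cls_iff[OF iN(2)] 2 by auto
    ultimately show ?thesis using doubleton_in_B_cls_iff[OF iN(1)] chord_eq_iff[OF ab i] 2 x y by auto
  next
    case 3
    have "fst (colour x y) = i \<longleftrightarrow> cdiff x (y-n) = i - 1" using colour_top_bot[of x y] 3 i by auto
    moreover have "{x,y} \<notin> A_cls n i" "{x,y} \<notin> B_cls n i" using doubleton_in_A_cls_iff[OF iN(1)] doubleton_in_B_cls_iff[OF iN(1)] 3 by auto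
    ultimately show ?thesis using doubleton_in_D_cls_iff[OF iN(2)] 3 y by auto
  next
    case 4
    have "fst (colour x y) = i \<longleftrightarrow> cdiff y (x-n) = i - 1" using colour_bot_top[of y x] 4 i by auto
    moreover have "{x,y} \<notin> A_cls n i" "{x,y} \<notin> B_cls n i" using doubleton_in_A_cls_iff[OF iN(1)] doubleton_in_B_cls_iff[OF iN(1)] 4 by auto
    ultimately show ?thesis using doubleton_in_D_cls_iff[OF iN(2)] 4 x by auto
  qed
qed

lemma colour_eq_diag_iff:
  assumes x: "x < 2*n" and y: "y < 2*n" and xy: "x \<noteq> y" and k: "h \<le> k" "k \<le> n - 1"
  shows "colour x y = (0,k) \<longleftrightarrow> {x,y} \<in> D_cls n k"
proof -
  have kN: "k < n" using k n_ge3 by auto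
  consider "x < n \<and> y < n" | "n \<le> x \<and> n \<le> y" | "x < n \<and> n \<le> y" | "y < n \<and> n \<le> x" by linarith
  then show ?thesis
  proof cases
    case 1
    have "fst (colour x y) \<ge> 1" using colour_top 1 chord_props[OF _ _ xy] by simp
    thus ?thesis using doubleton_in_D_cls_iff[OF kN] 1 by auto
  next
    case 2
    have ab: "x - n < n" "y - n < n" "x - n \<noteq> y - n" using 2 x y xy by arith+
    have "fst (colour x y) \<ge> 1" using colour_bot 2 chord_props[OF ab] by simp
    thus ?thesis using doubleton_in_D_cls_iff[OF kN] 2 by auto
  next
    case 3
    have "colour x y = (0,k) \<longleftrightarrow> cdiff x (y-n) = k" using colour_top_bot[of x y] 3 k by auto
    thus ?thesis using doubleton_in_D_cls_iff[OF kN] 3 y by auto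
  next
    case 4
    have "colour x y = (0,k) \<longleftrightarrow> cdiff y (x-n) = k" using colour_bot_top[of y x] 4 k by auto
    thus ?thesis using doubleton_in_D_cls_iff[OF kN] 4 x by auto
  qed
qed

abbreviation factor :: "nat \<times> nat \<Rightarrow> nat set set" where
  "factor \<equiv> partner_matching partner n"

lemma factor_class_union:
  assumes i: "1 \<le> i" "i \<le> h"
  shows "factor (i, 1) \<union> factor (i, 2) \<union> factor (i, 3) = A_cls n i \<union> B_cls n i \<union> D_cls n (i - 1)"
proof -
  have "\<Union> (factor ` ({i} \<times> {1,2,3})) = A_cls n i \<union> B_cls n i \<union> D_cls n (i - 1)"
  proof (rule colouring.Union_matchings_eq)
    show "{i} \<times> {1,2,3} \<subseteq> colours" using i unfolding colours_def by auto
    show "A_cls n i \<union> B_cls n i \<union> D_cls n (i - 1) \<subseteq> Kedges n"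
      using A_cls_B_cls_subset_Kedges[of i n] D_cls_subset_Kedges i n_eq by auto
    fix x y assume xy: "x < 2*n" "y < 2*n" "x \<noteq> y"
    then show "{x, y} \<in> A_cls n i \<union> B_cls n i \<union> D_cls n (i - 1) \<longleftrightarrow> colour x y \<in> {i} \<times> {1,2,3}"
      using fst_colour_eq_iff[OF xy i] colour_in_colours[OF xy] i
      by (cases "colour x y") (auto simp: colours_def)
  qed
  then show ?thesis by auto
qed

lemma D_cls_eq_factor:
  assumes k: "h \<le> k" "k \<le> n - 1"
  shows "D_cls n k = factor (0, k)"
proof -
  have "\<Union> (factor ` {(0, k)}) = D_cls n k"
  proof (rule colouring.Union_matchings_eq)
    show "{(0, k)} \<subseteq> colours" using k unfolding colours_def by auto
  qed (use D_cls_subset_Kedges colour_eq_diag_iff[OF _ _ _ k] in auto)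
  then show ?thesis by simp
qed

end

lemma tail_indices_image:
  fixes n :: nat
  assumes "n mod 6 = 5"
  shows "(\<lambda>(i, j). 3*i + j - n - 3) ` ({(n - 1) div 2<..(2*n - 1) div 3} \<times> {1..3})
    = {(n - 1) div 2..n - 1}"
proof -
  obtain m where m: "n = 6*m + 5" using assms by (metis div_mod_decomp mult.commute)
  then have h: "(n - 1) div 2 = 3*m + 2" and K: "(2*n - 1) div 3 = 4*m + 3" by simp_all
  have "k \<in> (\<lambda>(i, j). 3*i + j - n - 3) ` ({3*m + 2<..4*m + 3} \<times> {1..3})"
    if k: "3*m + 2 \<le> k" "k \<le> 6*m + 4" for k
  proof -
    define q r where "q = (k - (3*m + 2)) div 3" and "r = (k - (3*m + 2)) mod 3"
    have "k = 3*q + r + 3*m + 2" "r < 3" using k unfolding q_def r_def by auto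
    then show ?thesis using m k by (intro image_eqI[of _ _ "(q + 3*m + 3, r + 1)"]) auto
  qed
  then show ?thesis unfolding h K using m by (auto simp: image_iff)
qed

context odd_prime
begin

definition T :: "nat \<Rightarrow> nat \<Rightarrow> nat set set" where
  "T i j = (if i \<le> h then factor (i, j) else D_cls n (3*i + j - n - 3))"

lemma T_class_union:
  "1 \<le> i \<Longrightarrow> i \<le> h \<Longrightarrow> T i 1 \<union> T i 2 \<union> T i 3 = A_cls n i \<union> B_cls n i \<union> D_cls n (i - 1)"
  using factor_class_union by (simp add: T_def)

lemma T_beyond_half:
  assumes "h < i"
  shows "T i 1 = D_cls n (3*i - n - 2) \<and> T i 2 = D_cls n (3*i - n - 1) \<and> T i 3 = D_cls n (3*i - n)"
proof -
  have "n + 3 \<le> 3*i" using assms n_eq n_ge3 by linarith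
  then show ?thesis using assms by (simp add: T_def)
qed

lemma factors_eq_T_D:
  "{T i j | i j. 1 \<le> i \<and> i \<le> h \<and> 1 \<le> j \<and> j \<le> 3} \<union> {D_cls n k | k. h \<le> k \<and> k \<le> n - 1}
    = factor ` colours"
proof -
  have "{T i j | i j. 1 \<le> i \<and> i \<le> h \<and> 1 \<le> j \<and> j \<le> 3} = factor ` ({1..h} \<times> {1,2,3})"
    by (force simp: T_def)
  moreover have "{D_cls n k | k. h \<le> k \<and> k \<le> n - 1} = factor ` ({0} \<times> {h..n-1})"
    using D_cls_eq_factor by force
  ultimately show ?thesis unfolding colours_def image_Un by simp
qed

lemma one_factorization_T_D:
  "one_factorization n
    ({T i j | i j. 1 \<le> i \<and> i \<le> h \<and> 1 \<le> j \<and> j \<le> 3} \<union> {D_cls n k | k. h \<le> k \<and> k \<le> n - 1})"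
  unfolding factors_eq_T_D by (rule colouring.one_factorization_matchings)

lemma T_family_mod_6_eq_5:
  assumes "n mod 6 = 5"
  shows "{T i j | i j. 1 \<le> i \<and> i \<le> (2*n - 1) div 3 \<and> 1 \<le> j \<and> j \<le> 3}
    = {T i j | i j. 1 \<le> i \<and> i \<le> h \<and> 1 \<le> j \<and> j \<le> 3} \<union> {D_cls n k | k. h \<le> k \<and> k \<le> n - 1}"
proof -
  let ?K = "(2*n - 1) div 3"
  have "{T i j | i j. h < i \<and> i \<le> ?K \<and> 1 \<le> j \<and> j \<le> 3} = (\<lambda>(i, j). T i j) ` ({h<..?K} \<times> {1..3})"
    by force
  also have "\<dots> = (D_cls n \<circ> (\<lambda>(i, j). 3*i + j - n - 3)) ` ({h<..?K} \<times> {1..3})"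
    by (rule image_cong) (auto simp: T_def)
  also have "\<dots> = D_cls n ` {h..n - 1}"
    unfolding image_comp[symmetric] tail_indices_image[OF assms] h_def ..
  also have "\<dots> = {D_cls n k | k. h \<le> k \<and> k \<le> n - 1}"
    by auto
  finally have tail: "{T i j | i j. h < i \<and> i \<le> ?K \<and> 1 \<le> j \<and> j \<le> 3} = \<dots>" .
  have "h \<le> ?K" using n_eq by simp
  show ?thesis unfolding tail[symmetric]
  proof (intro equalityI subsetI)
    fix X assume "X \<in> {T i j | i j. 1 \<le> i \<and> i \<le> ?K \<and> 1 \<le> j \<and> j \<le> 3}"
    then obtain i j where "X = T i j" "1 \<le> i" "i \<le> ?K" "1 \<le> j" "j \<le> 3" by blast
    then show "X \<in> {T i j | i j. 1 \<le> i \<and> i \<le> h \<and> 1 \<le> j \<and> j \<le> 3}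
        \<union> {T i j | i j. h < i \<and> i \<le> ?K \<and> 1 \<le> j \<and> j \<le> 3}"
      by (cases "i \<le> h") auto
  next
    fix X assume "X \<in> {T i j | i j. 1 \<le> i \<and> i \<le> h \<and> 1 \<le> j \<and> j \<le> 3}
        \<union> {T i j | i j. h < i \<and> i \<le> ?K \<and> 1 \<le> j \<and> j \<le> 3}"
    then obtain i j where "X = T i j" "1 \<le> i" "i \<le> ?K" "1 \<le> j" "j \<le> 3"
      using \<open>h \<le> ?K\<close> by auto
    then show "X \<in> {T i j | i j. 1 \<le> i \<and> i \<le> ?K \<and> 1 \<le> j \<and> j \<le> 3}" by blast
  qed
qed

end

theorem lemma5:
  fixes n :: nat
  assumes "prime n" and "n mod 6 = 1 \<or> n mod 6 = 5"
  shows "\<exists>T :: nat \<Rightarrow> nat \<Rightarrow> nat set set.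
    (n mod 6 = 5 \<longrightarrow>
       one_factorization n {T i j | i j. 1 \<le> i \<and> i \<le> (2*n - 1) div 3 \<and> 1 \<le> j \<and> j \<le> 3}
     \<and> (\<forall>i. 1 \<le> i \<and> i \<le> (n - 1) div 2 \<longrightarrow>
          T i 1 \<union> T i 2 \<union> T i 3 = A_cls n i \<union> B_cls n i \<union> D_cls n (i - 1))
     \<and> (\<forall>i. (n + 1) div 2 \<le> i \<and> i \<le> (2*n - 1) div 3 \<longrightarrow>
          T i 1 = D_cls n (3*i - n - 2) \<and> T i 2 = D_cls n (3*i - n - 1) \<and> T i 3 = D_cls n (3*i - n)))
  \<and> (n mod 6 = 1 \<longrightarrow>
       one_factorization n
         ({T i j | i j. 1 \<le> i \<and> i \<le> (n - 1) div 2 \<and> 1 \<le> j \<and> j \<le> 3}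
          \<union> {D_cls n i | i. (n - 1) div 2 \<le> i \<and> i \<le> n - 1})
     \<and> (\<forall>i. 1 \<le> i \<and> i \<le> (n - 1) div 2 \<longrightarrow>
          T i 1 \<union> T i 2 \<union> T i 3 = A_cls n i \<union> B_cls n i \<union> D_cls n (i - 1)))"
proof -
  have "odd n" using assms(2) by presburger
  then interpret odd_prime n using assms(1) by unfold_locales
  have half: "(n - 1) div 2 = h" "(n + 1) div 2 = h + 1" using n_eq by (simp_all add: h_def)
  show ?thesis
    unfolding half
  proof (intro exI[of _ T] conjI impI allI)
    assume "n mod 6 = 5"
    show "one_factorization n {T i j | i j. 1 \<le> i \<and> i \<le> (2*n - 1) div 3 \<and> 1 \<le> j \<and> j \<le> 3}"
      unfolding T_family_mod_6_eq_5[OF \<open>n mod 6 = 5\<close>] by (rule one_factorization_T_D)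
  qed (use T_class_union T_beyond_half one_factorization_T_D in auto)
qed

end
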